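(* Let $(\Omega,\mathcal{F},(\mathcal{F}_t)_{t\in[0,T]},P)$ be a filtered probability space, $T>0$, and let $(X_t)_{t\in[0,T]}$ be a continuous martingale whose initial value $X_0$ is a deterministic constant. Let $M_T=\max_{0\le s\le T}X_s$. Then $$E\left(M_T^2\right)+2X_0^2\le 4E\left(X_T^2\right).$$ *)

theory Defs
  imports "HOL-Probability.Probability"
begin

definition filtration_on :: "'a measure \<Rightarrow> real \<Rightarrow> (real \<Rightarrow> 'a measure) \<Rightarrow> bool" where
  "filtration_on M T F \<longleftrightarrow>
     (\<forall>t\<in>{0..T}. subalgebra M (F t)) \<and>
     (\<forall>s t. 0 \<le> s \<longrightarrow> s \<le> t \<longrightarrow> t \<le> T \<longrightarrow> sets (F s) \<subseteq> sets (F t))"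

definition martingale_on ::
  "'a measure \<Rightarrow> real \<Rightarrow> (real \<Rightarrow> 'a measure) \<Rightarrow> (real \<Rightarrow> 'a \<Rightarrow> real) \<Rightarrow> bool" where
  "martingale_on M T F X \<longleftrightarrow>
     filtration_on M T F \<and>
     (\<forall>t\<in>{0..T}. integrable M (X t) \<and> X t \<in> borel_measurable (F t)) \<and>
     (\<forall>s t. 0 \<le> s \<longrightarrow> s \<le> t \<longrightarrow> t \<le> T \<longrightarrow>
        (AE \<omega> in M. real_cond_exp M (F s) (X t) \<omega> = X s \<omega>))"

end

theory Submission
  imports Defs
begin

text \<open>
  For the running maximum \<open>m n = max (y 0) ... (y n)\<close> of a real sequence one has the pathwise
  inequality \<open>(m n)\<^sup>2 \<le> 4 (y n)\<^sup>2 - 2 (y 0)\<^sup>2 - 4 (\<Sum>k<n. m k (y (k+1) - y k))\<close>: the square of the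
  maximum grows only when a new maximum is reached, and the cross term \<open>2 m n y n\<close> is absorbed
  by \<open>(m n)\<^sup>2/2 + 2 (y n)\<^sup>2\<close>. Sampling the martingale along a partition of \<open>[0,T]\<close>, the sum becomes
  a martingale transform with adapted square-integrable coefficients, so it has expectation
  zero and \<open>E (m n)\<^sup>2 + 2 E X\<^sub>0\<^sup>2 \<le> 4 E X\<^sub>T\<^sup>2\<close>. For continuous paths the maxima over the uniform
  grids \<open>k T/(N+1)\<close> converge to the maximum over \<open>[0,T]\<close>, and Fatou's lemma carries the
  bound to the limit.
\<close>

fun running_max :: "(nat \<Rightarrow> real) \<Rightarrow> nat \<Rightarrow> real" where
  "running_max y 0 = y 0"
| "running_max y (Suc n) = max (running_max y n) (y (Suc n))"

lemma running_max_ge: "j \<le> n \<Longrightarrow> y j \<le> running_max y n"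
  by (induction n) (auto simp: le_Suc_eq max_def)

lemma running_max_attained: "\<exists>j\<le>n. running_max y n = y j"
  by (induction n) (auto simp: max_def intro: le_SucI)

lemma running_max_sq_le_sum: "(running_max y n)\<^sup>2 \<le> (\<Sum>j\<le>n. (y j)\<^sup>2)"
proof -
  obtain j where "j \<le> n" "running_max y n = y j"
    using running_max_attained by blast
  then show ?thesis
    using member_le_sum[of j "{..n}" "\<lambda>j. (y j)\<^sup>2"] by auto
qed

lemma running_max_sq_bound_cross:
  "(running_max y n)\<^sup>2
     \<le> 2 * running_max y n * y n - (y 0)\<^sup>2 - 2 * (\<Sum>k<n. running_max y k * (y (Suc k) - y k))"
proof (induction n)
  case 0
  then show ?case by (simp add: power2_eq_square)
next
  case (Suc n)
  let ?m = "running_max y n" and ?m' = "running_max y (Suc n)"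
  \<comment> \<open>the maximum changes only when \<open>y (Suc n)\<close> exceeds it, and then \<open>?m' + ?m \<le> 2 * y (Suc n)\<close>\<close>
  have "?m'\<^sup>2 - ?m\<^sup>2 \<le> 2 * y (Suc n) * (?m' - ?m)"
  proof (cases "y (Suc n) \<le> ?m")
    case False
    then have "?m' = y (Suc n)" by simp
    moreover have "0 \<le> (y (Suc n) - ?m)\<^sup>2" by simp
    ultimately show ?thesis by (simp add: power2_eq_square algebra_simps)
  qed (simp add: max_def)
  then show ?case using Suc by (simp add: algebra_simps)
qed

lemma running_max_sq_bound:
  "(running_max y n)\<^sup>2
     \<le> 4 * (y n)\<^sup>2 - 2 * (y 0)\<^sup>2 - 4 * (\<Sum>k<n. running_max y k * (y (Suc k) - y k))"
proof -
  have "2 * running_max y n * y n \<le> (running_max y n)\<^sup>2 / 2 + 2 * (y n)\<^sup>2"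
    using sum_squares_ge_zero[of "running_max y n - 2 * y n" 0]
    by (simp add: power2_eq_square algebra_simps)
  then show ?thesis using running_max_sq_bound_cross[of y n] by simp
qed

definition uniform_grid :: "real \<Rightarrow> nat \<Rightarrow> nat \<Rightarrow> real" where
  "uniform_grid T N k = real k * T / real (Suc N)"

lemma uniform_grid_first [simp]: "uniform_grid T N 0 = 0"
  and uniform_grid_last [simp]: "uniform_grid T N (Suc N) = T"
  unfolding uniform_grid_def by simp_all

lemma mono_uniform_grid: "0 \<le> T \<Longrightarrow> mono (uniform_grid T N)"
  unfolding uniform_grid_def by (intro monoI divide_right_mono mult_right_mono) auto

lemma uniform_grid_mem:
  assumes "0 \<le> T" "k \<le> Suc N"
  shows "uniform_grid T N k \<in> {0..T}"
  using mono_uniform_grid[OF assms(1), of N] assms monoD[of "uniform_grid T N" k "Suc N"]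
  by (auto simp: uniform_grid_def)

lemma uniform_grid_approx:
  assumes "0 < T" "s \<in> {0..T}"
  obtains k where "k \<le> Suc N" "\<bar>uniform_grid T N k - s\<bar> \<le> T / real (Suc N)"
proof
  define k where "k = nat \<lfloor>s * real (Suc N) / T\<rfloor>"
  have "0 \<le> s * real (Suc N) / T" "s * real (Suc N) / T \<le> real (Suc N)"
    using assms mult_right_mono[of s T "real (Suc N)"] by (auto simp: divide_le_eq mult.commute)
  then have "real k \<le> s * real (Suc N) / T" "s * real (Suc N) / T < real k + 1"
    and "real k \<le> real (Suc N)"
    unfolding k_def by linarith+
  then have "uniform_grid T N k \<le> s" "s < (real k + 1) * T / real (Suc N)"
    and "k \<le> Suc N"
    using assms(1) by (simp_all add: uniform_grid_def field_simps)
  moreover have "(real k + 1) * T / real (Suc N) = uniform_grid T N k + T / real (Suc N)"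
    unfolding uniform_grid_def add_divide_distrib[symmetric] by (simp add: distrib_right)
  ultimately show "k \<le> Suc N" "\<bar>uniform_grid T N k - s\<bar> \<le> T / real (Suc N)"
    by simp_all
qed

lemma tendsto_running_max_uniform_grid:
  fixes f :: "real \<Rightarrow> real"
  assumes T: "0 < T" and cont: "continuous_on {0..T} f"
  shows "(\<lambda>N. running_max (\<lambda>k. f (uniform_grid T N k)) (Suc N)) \<longlonglongrightarrow> (SUP s\<in>{0..T}. f s)"
proof -
  obtain s0 where s0: "s0 \<in> {0..T}" and max: "\<And>s. s \<in> {0..T} \<Longrightarrow> f s \<le> f s0"
    using continuous_attains_sup[OF compact_Icc _ cont] T by auto
  have Sup: "(SUP s\<in>{0..T}. f s) = f s0"
    using s0 max by (intro cSup_eq_maximum) auto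
  have "\<forall>N. \<exists>k. k \<le> Suc N \<and> \<bar>uniform_grid T N k - s0\<bar> \<le> T / real (Suc N)"
    using uniform_grid_approx[OF T s0] by blast
  then obtain k where k: "\<And>N. k N \<le> Suc N" "\<And>N. \<bar>uniform_grid T N (k N) - s0\<bar> \<le> T / real (Suc N)"
    by (rule choice[THEN exE]) blast
  have mesh: "(\<lambda>N. T / real (Suc N)) \<longlonglongrightarrow> 0"
    by (rule LIMSEQ_Suc[OF lim_const_over_n])
  have lim_below: "(\<lambda>N. s0 - T / real (Suc N)) \<longlonglongrightarrow> s0"
    and lim_above: "(\<lambda>N. s0 + T / real (Suc N)) \<longlonglongrightarrow> s0"
    using tendsto_diff[OF tendsto_const mesh, of s0] tendsto_add[OF tendsto_const mesh, of s0]
    by simp_all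
  have "(\<lambda>N. uniform_grid T N (k N)) \<longlonglongrightarrow> s0"
    by (intro tendsto_sandwich[OF always_eventually always_eventually lim_below lim_above] allI)
       (use k(2) in \<open>auto simp: abs_diff_le_iff\<close>)
  moreover have "\<forall>\<^sub>F N in sequentially. uniform_grid T N (k N) \<in> {0..T}"
    using T k(1) by (intro always_eventually allI uniform_grid_mem) simp_all
  ultimately have lower: "(\<lambda>N. f (uniform_grid T N (k N))) \<longlonglongrightarrow> f s0"
    using continuous_on_tendsto_compose[OF cont _ s0] by blast
  have "f (uniform_grid T N (k N)) \<le> running_max (\<lambda>k. f (uniform_grid T N k)) (Suc N)"
    and "running_max (\<lambda>k. f (uniform_grid T N k)) (Suc N) \<le> f s0" for N
  proof -
    show "f (uniform_grid T N (k N)) \<le> running_max (\<lambda>k. f (uniform_grid T N k)) (Suc N)"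
      by (rule running_max_ge[OF k(1)])
    obtain j where "j \<le> Suc N"
      and "running_max (\<lambda>k. f (uniform_grid T N k)) (Suc N) = f (uniform_grid T N j)"
      using running_max_attained by blast
    then show "running_max (\<lambda>k. f (uniform_grid T N k)) (Suc N) \<le> f s0"
      using max uniform_grid_mem T by simp
  qed
  then show ?thesis
    unfolding Sup
    by (intro tendsto_sandwich[OF always_eventually always_eventually lower tendsto_const] allI)
qed

lemma measurable_running_max:
  assumes "\<And>j. j \<le> n \<Longrightarrow> y j \<in> borel_measurable N"
  shows "(\<lambda>x. running_max (\<lambda>j. y j x) n) \<in> borel_measurable N"
  using assms by (induction n) auto

lemma integrable_mult_of_square_integrable:
  fixes f g :: "'a \<Rightarrow> real"
  assumes "f \<in> borel_measurable M" "g \<in> borel_measurable M"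
    and "integrable M (\<lambda>x. (f x)\<^sup>2)" "integrable M (\<lambda>x. (g x)\<^sup>2)"
  shows "integrable M (\<lambda>x. f x * g x)"
proof (rule Bochner_Integration.integrable_bound)
  show "integrable M (\<lambda>x. (f x)\<^sup>2 + (g x)\<^sup>2)" using assms by simp
  show "(\<lambda>x. f x * g x) \<in> borel_measurable M" using assms by measurable
  have "\<bar>a * b\<bar> \<le> a\<^sup>2 + b\<^sup>2" for a b :: real
  proof -
    have "2 * \<bar>a * b\<bar> \<le> a\<^sup>2 + b\<^sup>2"
      using sum_squares_bound[of "\<bar>a\<bar>" "\<bar>b\<bar>"] by (simp add: abs_mult)
    then show ?thesis by linarith
  qed
  then show "AE x in M. norm (f x * g x) \<le> norm ((f x)\<^sup>2 + (g x)\<^sup>2)" by simp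
qed

lemma integrable_running_max_sq:
  assumes "\<And>j. j \<le> n \<Longrightarrow> y j \<in> borel_measurable M"
    and "\<And>j. j \<le> n \<Longrightarrow> integrable M (\<lambda>x. (y j x)\<^sup>2)"
  shows "integrable M (\<lambda>x. (running_max (\<lambda>j. y j x) n)\<^sup>2)"
proof (rule Bochner_Integration.integrable_bound)
  show "integrable M (\<lambda>x. \<Sum>j\<le>n. (y j x)\<^sup>2)"
    using assms(2) by (intro Bochner_Integration.integrable_sum) simp
  show "(\<lambda>x. (running_max (\<lambda>j. y j x) n)\<^sup>2) \<in> borel_measurable M"
    using measurable_running_max[of n y M] assms(1) by measurable
  show "AE x in M. norm ((running_max (\<lambda>j. y j x) n)\<^sup>2) \<le> norm (\<Sum>j\<le>n. (y j x)\<^sup>2)"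
    using running_max_sq_le_sum by (simp add: sum_nonneg)
qed

lemma nn_integral_le_of_tendsto:
  fixes u :: "nat \<Rightarrow> 'a \<Rightarrow> ennreal"
  assumes "\<And>n. u n \<in> borel_measurable M"
    and "\<And>x. x \<in> space M \<Longrightarrow> (\<lambda>n. u n x) \<longlonglongrightarrow> v x"
    and "\<And>n. (\<integral>\<^sup>+ x. u n x \<partial>M) \<le> B"
  shows "(\<integral>\<^sup>+ x. v x \<partial>M) \<le> B"
proof -
  have "(\<integral>\<^sup>+ x. v x \<partial>M) = (\<integral>\<^sup>+ x. liminf (\<lambda>n. u n x) \<partial>M)"
    using assms(2) by (intro nn_integral_cong lim_imp_Liminf[symmetric]) auto
  also have "\<dots> \<le> liminf (\<lambda>n. \<integral>\<^sup>+ x. u n x \<partial>M)"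
    using assms(1) by (rule nn_integral_liminf)
  also have "\<dots> \<le> B"
    using assms(3) by (intro Liminf_le) auto
  finally show ?thesis .
qed

lemma filtration_on_measurable_mono:
  assumes "filtration_on M T F" "0 \<le> s" "s \<le> t" "t \<le> T"
    and "f \<in> borel_measurable (F s)"
  shows "f \<in> borel_measurable (F t)"
proof -
  have "subalgebra M (F s)" "subalgebra M (F t)" "sets (F s) \<subseteq> sets (F t)"
    using assms(1-4) unfolding filtration_on_def by auto
  then have "subalgebra (F t) (F s)" unfolding subalgebra_def by simp
  then show ?thesis using assms(5) by (rule measurable_from_subalg)
qed

lemma martingale_on_adapted:
  assumes "martingale_on M T F X" "t \<in> {0..T}"
  shows "X t \<in> borel_measurable (F t)"
  using assms unfolding martingale_on_def by auto

lemma martingale_on_measurable: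
  assumes "martingale_on M T F X" "t \<in> {0..T}"
  shows "X t \<in> borel_measurable M"
  using assms unfolding martingale_on_def by auto

context prob_space
begin

lemma martingale_on_square_integrable_mono:
  assumes mart: "martingale_on M T F X" and st: "0 \<le> s" "s \<le> t" "t \<le> T"
    and sq: "integrable M (\<lambda>x. (X t x)\<^sup>2)"
  shows "integrable M (\<lambda>x. (X s x)\<^sup>2)"
proof -
  have "subalgebra M (F s)" and "integrable M (X t)"
    and X_s: "X s \<in> borel_measurable M"
    and cond: "AE x in M. real_cond_exp M (F s) (X t) x = X s x"
    using mart st unfolding martingale_on_def filtration_on_def by auto
  interpret finite_measure_subalgebra M "F s"
    by unfold_locales fact
  have jensen: "AE x in M. (real_cond_exp M (F s) (X t) x)\<^sup>2 \<le> real_cond_exp M (F s) (\<lambda>x. (X t x)\<^sup>2) x"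
    by (rule real_cond_exp_jensens_inequality(2)[where I=UNIV and q="\<lambda>x. x\<^sup>2"])
       (use \<open>integrable M (X t)\<close> sq convex_power2 in auto)
  show ?thesis
  proof (rule Bochner_Integration.integrable_bound)
    show "integrable M (real_cond_exp M (F s) (\<lambda>x. (X t x)\<^sup>2))"
      using sq by (rule real_cond_exp_int(1))
    show "(\<lambda>x. (X s x)\<^sup>2) \<in> borel_measurable M"
      using X_s by measurable
    show "AE x in M. norm ((X s x)\<^sup>2) \<le> norm (real_cond_exp M (F s) (\<lambda>x. (X t x)\<^sup>2) x)"
      using jensen cond by eventually_elim auto
  qed
qed

lemma martingale_on_integral_mult_increment:
  assumes mart: "martingale_on M T F X" and st: "0 \<le> s" "s \<le> t" "t \<le> T"
    and H: "H \<in> borel_measurable (F s)" "integrable M (\<lambda>x. (H x)\<^sup>2)"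
    and sq: "integrable M (\<lambda>x. (X t x)\<^sup>2)"
  shows "integrable M (\<lambda>x. H x * (X t x - X s x))"
    and "(\<integral>x. H x * (X t x - X s x) \<partial>M) = 0"
proof -
  have "subalgebra M (F s)"
    and cond: "AE x in M. real_cond_exp M (F s) (X t) x = X s x"
    using mart st unfolding martingale_on_def filtration_on_def by auto
  interpret finite_measure_subalgebra M "F s"
    by unfold_locales fact
  have [measurable]: "H \<in> borel_measurable M" "X s \<in> borel_measurable M" "X t \<in> borel_measurable M"
    using measurable_from_subalg[OF subalg H(1)] martingale_on_measurable[OF mart] st by auto
  have int_t: "integrable M (\<lambda>x. H x * X t x)"
    using H sq by (intro integrable_mult_of_square_integrable) auto
  have int_s: "integrable M (\<lambda>x. H x * X s x)"
    using H martingale_on_square_integrable_mono[OF mart st sq]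
    by (intro integrable_mult_of_square_integrable) auto
  have "(\<integral>x. H x * X t x \<partial>M) = (\<integral>x. H x * real_cond_exp M (F s) (X t) x \<partial>M)"
    using real_cond_exp_intg(2)[OF int_t H(1)] by simp
  also have "\<dots> = (\<integral>x. H x * X s x \<partial>M)"
  proof (rule integral_cong_AE)
    show "AE x in M. H x * real_cond_exp M (F s) (X t) x = H x * X s x"
      using cond by eventually_elim simp
  qed (use borel_measurable_cond_exp2 in measurable)
  finally have "(\<integral>x. H x * X t x \<partial>M) = (\<integral>x. H x * X s x \<partial>M)" .
  moreover have "(\<lambda>x. H x * (X t x - X s x)) = (\<lambda>x. H x * X t x - H x * X s x)"
    by (simp add: algebra_simps)
  ultimately show "integrable M (\<lambda>x. H x * (X t x - X s x))"
    and "(\<integral>x. H x * (X t x - X s x) \<partial>M) = 0"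
    using int_t int_s by simp_all
qed

lemma martingale_on_doob_L2_running_max:
  assumes mart: "martingale_on M T F X"
    and t: "mono t" "0 \<le> t 0" "t n \<le> T"
    and sq: "integrable M (\<lambda>x. (X (t n) x)\<^sup>2)"
  shows "integrable M (\<lambda>x. (running_max (\<lambda>k. X (t k) x) n)\<^sup>2)"
    and "(\<integral>x. (running_max (\<lambda>k. X (t k) x) n)\<^sup>2 \<partial>M) + 2 * (\<integral>x. (X (t 0) x)\<^sup>2 \<partial>M)
           \<le> 4 * (\<integral>x. (X (t n) x)\<^sup>2 \<partial>M)"
proof -
  define m where "m k x = running_max (\<lambda>j. X (t j) x) k" for k x
  define S where "S x = (\<Sum>k<n. m k x * (X (t (Suc k)) x - X (t k) x))" for x
  have t_le: "t j \<le> t k" if "j \<le> k" for j k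
    using t(1) that by (rule monoD)
  have t_in: "0 \<le> t k" "t k \<le> T" if "k \<le> n" for k
    using t t_le[of 0 k] t_le[OF that] by auto
  have filt: "filtration_on M T F"
    using mart unfolding martingale_on_def by simp
  have X_meas: "X (t k) \<in> borel_measurable M" if "k \<le> n" for k
    using martingale_on_measurable[OF mart] t_in[OF that] by simp
  have X_sq: "integrable M (\<lambda>x. (X (t k) x)\<^sup>2)" if "k \<le> n" for k
    using martingale_on_square_integrable_mono[OF mart t_in(1)[OF that] t_le[OF that] t(3) sq] .
  have m_adapted: "m k \<in> borel_measurable (F (t k))" if "k \<le> n" for k
    unfolding m_def
  proof (rule measurable_running_max[where y = "\<lambda>j. X (t j)"])
    fix j assume "j \<le> k"
    with that have "j \<le> n" by simp
    with martingale_on_adapted[OF mart] t_in have "X (t j) \<in> borel_measurable (F (t j))"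
      by simp
    with filtration_on_measurable_mono[OF filt t_in(1)[OF \<open>j \<le> n\<close>] t_le[OF \<open>j \<le> k\<close>] t_in(2)[OF that]]
    show "X (t j) \<in> borel_measurable (F (t k))" .
  qed
  have m_sq: "integrable M (\<lambda>x. (m k x)\<^sup>2)" if "k \<le> n" for k
    unfolding m_def using X_meas X_sq that by (intro integrable_running_max_sq) simp_all
  have incr: "integrable M (\<lambda>x. m k x * (X (t (Suc k)) x - X (t k) x))"
      "(\<integral>x. m k x * (X (t (Suc k)) x - X (t k) x) \<partial>M) = 0" if "k < n" for k
    using martingale_on_integral_mult_increment[OF mart t_in(1) t_le t_in(2) m_adapted m_sq X_sq]
      that by simp_all
  have S_int: "integrable M S"
    unfolding S_def using incr(1) by (intro Bochner_Integration.integrable_sum) simp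
  have S_zero: "(\<integral>x. S x \<partial>M) = 0"
    unfolding S_def using incr by (simp add: Bochner_Integration.integral_sum)
  show "integrable M (\<lambda>x. (running_max (\<lambda>k. X (t k) x) n)\<^sup>2)"
    using m_sq[of n] unfolding m_def by simp
  have "(\<integral>x. (m n x)\<^sup>2 \<partial>M) \<le> (\<integral>x. 4 * (X (t n) x)\<^sup>2 - 2 * (X (t 0) x)\<^sup>2 - 4 * S x \<partial>M)"
    using m_sq X_sq S_int running_max_sq_bound unfolding m_def S_def
    by (intro integral_mono) auto
  also have "\<dots> = 4 * (\<integral>x. (X (t n) x)\<^sup>2 \<partial>M) - 2 * (\<integral>x. (X (t 0) x)\<^sup>2 \<partial>M)"
    using X_sq S_int S_zero by simp
  finally show "(\<integral>x. (running_max (\<lambda>k. X (t k) x) n)\<^sup>2 \<partial>M) + 2 * (\<integral>x. (X (t 0) x)\<^sup>2 \<partial>M)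
      \<le> 4 * (\<integral>x. (X (t n) x)\<^sup>2 \<partial>M)"
    unfolding m_def by simp
qed

lemma martingale_on_doob_L2_Sup:
  assumes T: "0 < T" and mart: "martingale_on M T F X"
    and cont: "\<And>x. x \<in> space M \<Longrightarrow> continuous_on {0..T} (\<lambda>t. X t x)"
    and sq: "integrable M (\<lambda>x. (X T x)\<^sup>2)"
  shows "(\<integral>\<^sup>+ x. ennreal ((SUP s\<in>{0..T}. X s x)\<^sup>2) \<partial>M) + ennreal (2 * (\<integral>x. (X 0 x)\<^sup>2 \<partial>M))
           \<le> ennreal (4 * (\<integral>x. (X T x)\<^sup>2 \<partial>M))"
proof -
  define I where "I = (\<integral>x. (X T x)\<^sup>2 \<partial>M)"
  define J where "J = (\<integral>x. (X 0 x)\<^sup>2 \<partial>M)"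
  define m where "m N x = running_max (\<lambda>k. X (uniform_grid T N k) x) (Suc N)" for N x
  have grid: "mono (uniform_grid T N)" "0 \<le> uniform_grid T N 0" "uniform_grid T N (Suc N) \<le> T"
    for N
    using T by (simp_all add: mono_uniform_grid)
  have m_sq: "integrable M (\<lambda>x. (m N x)\<^sup>2)"
    and discrete: "(\<integral>x. (m N x)\<^sup>2 \<partial>M) + 2 * J \<le> 4 * I" for N
    using martingale_on_doob_L2_running_max[OF mart grid] sq
    unfolding m_def I_def J_def by (simp_all only: uniform_grid_first uniform_grid_last)
  have "0 \<le> J" "0 \<le> (\<integral>x. (m 0 x)\<^sup>2 \<partial>M)"
    unfolding J_def by simp_all
  with discrete[of 0] have "2 * J \<le> 4 * I"
    by linarith
  have "(\<integral>\<^sup>+ x. ennreal ((SUP s\<in>{0..T}. X s x)\<^sup>2) \<partial>M) \<le> ennreal (4 * I - 2 * J)"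
  proof (rule nn_integral_le_of_tendsto)
    show "(\<lambda>x. ennreal ((m N x)\<^sup>2)) \<in> borel_measurable M" for N
      using m_sq by measurable
    show "(\<lambda>N. ennreal ((m N x)\<^sup>2)) \<longlonglongrightarrow> ennreal ((SUP s\<in>{0..T}. X s x)\<^sup>2)"
      if "x \<in> space M" for x
      using tendsto_running_max_uniform_grid[OF T cont[OF that]] unfolding m_def
      by (intro tendsto_ennrealI tendsto_power)
    show "(\<integral>\<^sup>+ x. ennreal ((m N x)\<^sup>2) \<partial>M) \<le> ennreal (4 * I - 2 * J)" for N
      using discrete[of N] m_sq by (simp add: nn_integral_eq_integral ennreal_leI)
  qed
  then have "(\<integral>\<^sup>+ x. ennreal ((SUP s\<in>{0..T}. X s x)\<^sup>2) \<partial>M) + ennreal (2 * J)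
      \<le> ennreal (4 * I - 2 * J) + ennreal (2 * J)"
    by (rule add_right_mono)
  also have "\<dots> = ennreal (4 * I)"
    using \<open>0 \<le> J\<close> \<open>2 * J \<le> 4 * I\<close> by (simp flip: ennreal_plus)
  finally show ?thesis
    unfolding I_def J_def .
qed

end

theorem mainTheorem5:
  fixes M :: "'a measure" and F :: "real \<Rightarrow> 'a measure"
    and X :: "real \<Rightarrow> 'a \<Rightarrow> real" and T x0 :: real
  assumes "prob_space M"
    and "T > 0"
    and "martingale_on M T F X"
    and "\<forall>\<omega>\<in>space M. continuous_on {0..T} (\<lambda>t. X t \<omega>)"
    and "\<forall>\<omega>\<in>space M. X 0 \<omega> = x0"
  shows "(\<integral>\<^sup>+ \<omega>. ennreal ((SUP s\<in>{0..T}. X s \<omega>)\<^sup>2) \<partial>M) + ennreal (2 * x0\<^sup>2)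
           \<le> 4 * (\<integral>\<^sup>+ \<omega>. ennreal ((X T \<omega>)\<^sup>2) \<partial>M)"
proof -
  interpret prob_space M by fact
  have X_T: "X T \<in> borel_measurable M"
    using martingale_on_measurable[OF assms(3)] assms(2) by simp
  show ?thesis
  proof (cases "integrable M (\<lambda>\<omega>. (X T \<omega>)\<^sup>2)")
    case True
    have "(\<integral>\<omega>. (X 0 \<omega>)\<^sup>2 \<partial>M) = (\<integral>\<omega>. x0\<^sup>2 \<partial>M)"
      using assms(5) by (intro Bochner_Integration.integral_cong) simp_all
    then have "(\<integral>\<omega>. (X 0 \<omega>)\<^sup>2 \<partial>M) = x0\<^sup>2"
      by (simp add: prob_space)
    with martingale_on_doob_L2_Sup[OF assms(2,3) _ True] assms(4)
    have "(\<integral>\<^sup>+ \<omega>. ennreal ((SUP s\<in>{0..T}. X s \<omega>)\<^sup>2) \<partial>M) + ennreal (2 * x0\<^sup>2)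
        \<le> ennreal (4 * (\<integral>\<omega>. (X T \<omega>)\<^sup>2 \<partial>M))"
      by simp
    also have "\<dots> = 4 * (\<integral>\<^sup>+ \<omega>. ennreal ((X T \<omega>)\<^sup>2) \<partial>M)"
      using True by (simp add: nn_integral_eq_integral ennreal_mult)
    finally show ?thesis .
  next
    case False
    with X_T have "(\<integral>\<^sup>+ \<omega>. ennreal ((X T \<omega>)\<^sup>2) \<partial>M) = \<infinity>"
      by (simp add: integrable_iff_bounded less_top[symmetric])
    then show ?thesis
      by (simp add: ennreal_mult_top)
  qed
qed

end
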